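(* Let $\mathbb{K}$ be a field and let $P$ be a nonempty set of primes. Let $\mathcal F=\{f_n(q)\}_{n=1}^\infty$ be a solution of $f_{mn}(q)=f_m(q)f_n(q^m)$ (for all $m,n\in\mathbb N$) in $\mathbb{K}[q]$ with $\mathrm{supp}(\mathcal F)=S(P)$. Then there exist a set $P_H\supseteq P$ of primes and a solution $\mathcal H$ of the same functional equation with $\mathrm{supp}(\mathcal H)=S(P_H)$ such that the restriction of $\mathcal H$ to $S(P)$ equals $\mathcal F$ and $\mathcal H$ is maximal.
   Context: $\mathbb N=\{1,2,3,\dots\}$. $\mathrm{supp}(\mathcal F)=\{n\in\mathbb N: f_n(q)\ne0\}$. For a set $P$ of primes, $S(P)$ is the multiplicative semigroup of positive integers generated by $P$ (including $1$). If $\mathcal G=\{g_n\}$ is a solution with $\mathrm{supp}(\mathcal G)=S(P_G)$ and $P\subseteq P_G$ is nonempty, the restriction of $\mathcal G$ to $S(P)$ is the sequence $\{f_n\}$ with $f_n=g_n$ for $n\in S(P)$ and $f_n=0$ for $n\notin S(P)$; it is again a solution. A solution $\mathcal H$ with support $S(P_H)$ is called maximal if it is not the restriction of any solution $\mathcal G$ with support $S(P_G)$, $P_G\supsetneq P_H$, to $S(P_H)$. *)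

theory Defs
  imports "HOL-Computational_Algebra.Computational_Algebra"
begin

text \<open>Sequences f_1, f_2, ... of polynomials are modelled as functions nat => 'a poly;
  the value at index 0 is irrelevant and ignored everywhere.\<close>

definition is_solution :: "(nat \<Rightarrow> 'a::field poly) \<Rightarrow> bool" where
  "is_solution f \<longleftrightarrow>
     (\<forall>m n. m \<ge> 1 \<longrightarrow> n \<ge> 1 \<longrightarrow> f (m * n) = f m * pcompose (f n) (monom 1 m))"

definition supp :: "(nat \<Rightarrow> 'a::zero) \<Rightarrow> nat set" where
  "supp f = {n. n \<ge> 1 \<and> f n \<noteq> 0}"

inductive_set S :: "nat set \<Rightarrow> nat set" for P :: "nat set" where
  one: "1 \<in> S P"
| mult: "p \<in> P \<Longrightarrow> n \<in> S P \<Longrightarrow> p * n \<in> S P"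

definition prime_set :: "nat set \<Rightarrow> bool" where
  "prime_set P \<longleftrightarrow> (\<forall>p\<in>P. prime p)"

definition restrict_to :: "(nat \<Rightarrow> 'a::zero) \<Rightarrow> nat set \<Rightarrow> nat \<Rightarrow> 'a" where
  "restrict_to g P n = (if n \<in> S P then g n else 0)"

definition seq_eq :: "(nat \<Rightarrow> 'a) \<Rightarrow> (nat \<Rightarrow> 'a) \<Rightarrow> bool" where
  "seq_eq f g \<longleftrightarrow> (\<forall>n\<ge>1. f n = g n)"

definition maximal_solution :: "(nat \<Rightarrow> 'a::field poly) \<Rightarrow> nat set \<Rightarrow> bool" where
  "maximal_solution h PH \<longleftrightarrow>
     is_solution h \<and> prime_set PH \<and> supp h = S PH \<and>
     \<not> (\<exists>g PG. is_solution g \<and> prime_set PG \<and> supp g = S PG \<and> PH \<subset> PG \<and>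
              seq_eq (restrict_to g PH) h)"

end

theory Submission
  imports Defs
begin

(* Order the solutions whose support is a prime semigroup S(Q) by extension, i.e. by inclusion of
   their graphs over the support. The union of a nonempty chain of such graphs is again one: it is
   single-valued, its domain is a union of a chain of semigroups S(Q), which is S of the union of
   the Q's, and the functional equation at m, n only involves m, n and m n, which all lie in the
   support of a single member of the chain because S(Q) is closed under taking divisors. Zorn's
   lemma gives a maximal extension h of f; as S(Q) determines the prime set Q, a solution
   restricting to h on a strictly larger prime set would strictly enlarge the graph of h. *)

lemma Suc_0_in_S [simp]: "Suc 0 \<in> S Q"
  using S.one by simp

lemma S_mono: "n \<in> S Q \<Longrightarrow> Q \<subseteq> Q' \<Longrightarrow> n \<in> S Q'"
  by (induction rule: S.induct) (auto intro: S.intros)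

lemma S_mult: "m \<in> S Q \<Longrightarrow> n \<in> S Q \<Longrightarrow> m * n \<in> S Q"
  by (induction rule: S.induct) (auto simp: mult.assoc intro: S.intros)

lemma generator_in_S: "p \<in> Q \<Longrightarrow> p \<in> S Q"
  using S.mult[OF _ S.one, of p Q] by simp

lemma prime_in_S_iff:
  assumes "prime p"
  shows "p \<in> S Q \<longleftrightarrow> p \<in> Q"
proof
  assume "p \<in> S Q"
  then show "p \<in> Q"
    using assms
  proof (induction rule: S.induct)
    case (mult q n)
    then have "q = 1 \<or> n = 1" using prime_product by blast
    then show ?case using mult by auto
  qed simp
qed (rule generator_in_S)

lemma S_subset_iff:
  assumes "prime_set Q"
  shows "S Q \<subseteq> S Q' \<longleftrightarrow> Q \<subseteq> Q'"
proof
  assume "S Q \<subseteq> S Q'"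
  then show "Q \<subseteq> Q'"
    using assms generator_in_S prime_in_S_iff unfolding prime_set_def by blast
qed (use S_mono in blast)

lemma S_divisor_closed:
  assumes "m * n \<in> S Q" "prime_set Q"
  shows "m \<in> S Q"
  using assms
proof (induction "m * n" arbitrary: m n rule: S.induct)
  case one
  then show ?case by (simp add: S.one)
next
  case (mult p k)
  have "prime p" using mult.hyps(1) mult.prems unfolding prime_set_def by blast
  moreover have "p dvd m * n" by (metis dvd_triv_left mult.hyps(4))
  ultimately consider m' where "m = p * m'" | n' where "n = p * n'"
    using prime_dvd_mult_iff by (metis dvdE)
  then show ?case
  proof cases
    case (1 m')
    then have "k = m' * n"
      using mult.hyps(4) \<open>prime p\<close> by (simp add: mult.assoc)
    then have "m' \<in> S Q"
      using mult.hyps(3) mult.prems by blast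
    then show ?thesis using 1 mult.hyps(1) by (simp add: S.mult)
  next
    case (2 n')
    then have "k = m * n'"
      using mult.hyps(4) \<open>prime p\<close> by (simp add: mult.left_commute)
    then show ?thesis
      using mult.hyps(3) mult.prems by blast
  qed
qed

lemma S_Union_chain:
  assumes "Qs \<noteq> {}" "chain\<^sub>\<subseteq> Qs"
  shows "S (\<Union>Qs) = (\<Union>Q\<in>Qs. S Q)"
proof
  show "S (\<Union>Qs) \<subseteq> (\<Union>Q\<in>Qs. S Q)"
  proof
    fix n assume "n \<in> S (\<Union>Qs)"
    then show "n \<in> (\<Union>Q\<in>Qs. S Q)"
    proof (induction rule: S.induct)
      case one
      then show ?case using assms(1) by (auto intro: S.one)
    next
      case (mult p n)
      then obtain Q1 Q2 where "Q1 \<in> Qs" "p \<in> Q1" "Q2 \<in> Qs" "n \<in> S Q2" by auto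
      moreover have "Q1 \<subseteq> Q2 \<or> Q2 \<subseteq> Q1"
        using assms(2) \<open>Q1 \<in> Qs\<close> \<open>Q2 \<in> Qs\<close> unfolding chain_subset_def by blast
      ultimately have "p * n \<in> S Q1 \<or> p * n \<in> S Q2"
        by (meson S.mult S_mono generator_in_S S_mult subsetD)
      then show ?case
        using \<open>Q1 \<in> Qs\<close> \<open>Q2 \<in> Qs\<close> by blast
    qed
  qed
  show "(\<Union>Q\<in>Qs. S Q) \<subseteq> S (\<Union>Qs)"
    by (auto intro: S_mono)
qed

definition prime_semigroup :: "nat set \<Rightarrow> bool" where
  "prime_semigroup A \<longleftrightarrow> (\<exists>Q. prime_set Q \<and> A = S Q)"

lemma prime_semigroup_Union_chain:
  assumes "\<A> \<noteq> {}" "chain\<^sub>\<subseteq> \<A>" "\<And>A. A \<in> \<A> \<Longrightarrow> prime_semigroup A"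
  shows "prime_semigroup (\<Union>\<A>)"
proof -
  define Qs where "Qs = {Q. prime_set Q \<and> S Q \<in> \<A>}"
  have "S ` Qs = \<A>"
  proof
    show "\<A> \<subseteq> S ` Qs"
    proof
      fix A assume "A \<in> \<A>"
      then obtain Q where "prime_set Q" "A = S Q"
        using assms(3) unfolding prime_semigroup_def by blast
      then show "A \<in> S ` Qs"
        using \<open>A \<in> \<A>\<close> unfolding Qs_def by blast
    qed
  qed (auto simp: Qs_def)
  then have "Qs \<noteq> {}"
    using assms(1) by blast
  moreover have "chain\<^sub>\<subseteq> Qs"
    unfolding chain_subset_def
  proof (intro ballI)
    fix Q1 Q2 assume "Q1 \<in> Qs" "Q2 \<in> Qs"
    then have "S Q1 \<subseteq> S Q2 \<or> S Q2 \<subseteq> S Q1" "prime_set Q1" "prime_set Q2"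
      using assms(2) unfolding chain_subset_def Qs_def by auto
    then show "Q1 \<subseteq> Q2 \<or> Q2 \<subseteq> Q1"
      using S_subset_iff by blast
  qed
  ultimately have "S (\<Union>Qs) = \<Union>\<A>"
    using S_Union_chain \<open>S ` Qs = \<A>\<close> by metis
  moreover have "prime_set (\<Union>Qs)"
    unfolding Qs_def prime_set_def by blast
  ultimately show ?thesis
    unfolding prime_semigroup_def by blast
qed

definition supp_graph :: "(nat \<Rightarrow> 'a::zero) \<Rightarrow> (nat \<times> 'a) set" where
  "supp_graph g = {(n, g n) | n. n \<in> supp g}"

definition semigroup_solution :: "(nat \<Rightarrow> 'a::field poly) \<Rightarrow> bool" where
  "semigroup_solution g \<longleftrightarrow> is_solution g \<and> prime_semigroup (supp g)"

lemma mem_supp_graph_iff [simp]: "(n, y) \<in> supp_graph g \<longleftrightarrow> n \<in> supp g \<and> y = g n"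
  unfolding supp_graph_def by blast

lemma Domain_supp_graph [simp]: "Domain (supp_graph g) = supp g"
  unfolding supp_graph_def by force

lemma supp_graph_subset_iff:
  "supp_graph g \<subseteq> supp_graph g' \<longleftrightarrow> (\<forall>n\<in>supp g. g' n = g n)"
  unfolding supp_graph_def supp_def by force

lemma seq_eq_restrict_to_iff:
  assumes "supp f = S P"
  shows "seq_eq (restrict_to g P) f \<longleftrightarrow> supp_graph f \<subseteq> supp_graph g"
  using assms unfolding seq_eq_def restrict_to_def supp_graph_subset_iff
  by (auto simp: supp_def)

lemma ex_supp_graph_eq:
  fixes R :: "(nat \<times> 'a::zero) set"
  assumes "single_valued R" and R: "\<And>n y. (n, y) \<in> R \<Longrightarrow> n \<ge> 1 \<and> y \<noteq> 0"
  shows "\<exists>g. supp_graph g = R"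
proof
  define g where "g n = (if n \<in> Domain R then THE y. (n, y) \<in> R else 0)" for n
  have "(n, g n) \<in> R" if "n \<in> Domain R" for n
    using that assms(1) unfolding g_def single_valued_def by (auto intro: theI)
  moreover have "y = g n" if "(n, y) \<in> R" for n y
    using that calculation assms(1) unfolding single_valued_def by blast
  moreover have "supp g = Domain R"
    using calculation R unfolding supp_def g_def by fastforce
  ultimately show "supp_graph g = R"
    unfolding supp_graph_def by auto
qed

lemma is_solution_if_locally_solution:
  assumes "prime_semigroup (supp g)"
    and local: "\<And>k. k \<in> supp g \<Longrightarrow>
      \<exists>g'. semigroup_solution g' \<and> k \<in> supp g' \<and> supp_graph g' \<subseteq> supp_graph g"
  shows "is_solution g"
  unfolding is_solution_def
proof (intro allI impI)
  fix m n :: nat assume "m \<ge> 1" "n \<ge> 1"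
  show "g (m * n) = g m * pcompose (g n) (monom 1 m)"
  proof (cases "m * n \<in> supp g")
    case True
    then obtain g' where g': "semigroup_solution g'" "m * n \<in> supp g'"
      and "supp_graph g' \<subseteq> supp_graph g"
      using local by blast
    then have agree: "g k = g' k" if "k \<in> supp g'" for k
      using that supp_graph_subset_iff by blast
    obtain Q' where "prime_set Q'" "supp g' = S Q'"
      using g'(1) unfolding semigroup_solution_def prime_semigroup_def by blast
    then have "m \<in> supp g'" "n \<in> supp g'"
      using g'(2) S_divisor_closed[of m n] S_divisor_closed[of n m] by (simp_all add: mult.commute)
    moreover have "g' (m * n) = g' m * pcompose (g' n) (monom 1 m)"
      using g'(1) \<open>m \<ge> 1\<close> \<open>n \<ge> 1\<close> unfolding semigroup_solution_def is_solution_def by blast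
    ultimately show ?thesis
      using agree g'(2) by simp
  next
    case False
    then have "m \<notin> supp g \<or> n \<notin> supp g"
      using assms(1) S_mult unfolding prime_semigroup_def by blast
    then have "g m = 0 \<or> g n = 0"
      using \<open>m \<ge> 1\<close> \<open>n \<ge> 1\<close> unfolding supp_def by blast
    moreover have "g (m * n) = 0"
      using False \<open>m \<ge> 1\<close> \<open>n \<ge> 1\<close> unfolding supp_def by simp
    ultimately show ?thesis
      by auto
  qed
qed

lemma Union_chain_supp_graph:
  assumes "\<C> \<noteq> {}" "subset.chain (supp_graph ` Collect semigroup_solution) \<C>"
  shows "\<Union>\<C> \<in> supp_graph ` Collect semigroup_solution"
proof -
  have C: "\<C> \<subseteq> supp_graph ` Collect semigroup_solution" "chain\<^sub>\<subseteq> \<C>"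
    using assms(2) unfolding subset.chain_def chain_subset_def by blast+
  have "single_valued (\<Union>\<C>)"
  proof (rule single_valuedI)
    fix n y y' assume "(n, y) \<in> \<Union>\<C>" "(n, y') \<in> \<Union>\<C>"
    then obtain X where "X \<in> \<C>" "(n, y) \<in> X" "(n, y') \<in> X"
      using C(2) unfolding chain_subset_def by blast
    then obtain g' where "X = supp_graph g'"
      using C(1) by blast
    then show "y = y'"
      using \<open>(n, y) \<in> X\<close> \<open>(n, y') \<in> X\<close> by simp
  qed
  moreover have "n \<ge> 1 \<and> y \<noteq> 0" if "(n, y) \<in> \<Union>\<C>" for n y
    using that C(1) by (auto simp: supp_def)
  ultimately obtain g where g: "supp_graph g = \<Union>\<C>"
    using ex_supp_graph_eq by blast
  then have supp_g: "supp g = \<Union>(Domain ` \<C>)"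
    by (metis Domain_Union Domain_supp_graph)
  have "prime_semigroup (supp g)"
    unfolding supp_g
  proof (rule prime_semigroup_Union_chain)
    show "Domain ` \<C> \<noteq> {}"
      using assms(1) by blast
    show "chain\<^sub>\<subseteq> (Domain ` \<C>)"
      using C(2) Domain_mono unfolding chain_subset_def by blast
    show "prime_semigroup A" if "A \<in> Domain ` \<C>" for A
      using that C(1) unfolding semigroup_solution_def by auto
  qed
  moreover have "is_solution g"
  proof (rule is_solution_if_locally_solution)
    show "prime_semigroup (supp g)" by fact
    fix k assume "k \<in> supp g"
    then obtain X where "X \<in> \<C>" "k \<in> Domain X"
      unfolding supp_g by blast
    moreover obtain g' where "semigroup_solution g'" "X = supp_graph g'"
      using C(1) \<open>X \<in> \<C>\<close> by blast
    ultimately show "\<exists>g'. semigroup_solution g' \<and> k \<in> supp g' \<and> supp_graph g' \<subseteq> supp_graph g"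
      using g by auto
  qed
  ultimately show ?thesis
    using g unfolding semigroup_solution_def by blast
qed

lemma maximal_solutionI:
  assumes "is_solution h" "prime_set PH" "supp h = S PH"
    and max: "\<And>g. semigroup_solution g \<Longrightarrow> supp_graph h \<subseteq> supp_graph g \<Longrightarrow>
      supp_graph g = supp_graph h"
  shows "maximal_solution h PH"
  unfolding maximal_solution_def
proof (intro conjI notI assms(1-3))
  assume "\<exists>g PG. is_solution g \<and> prime_set PG \<and> supp g = S PG \<and> PH \<subset> PG \<and>
            seq_eq (restrict_to g PH) h"
  then obtain g PG where g: "is_solution g" "prime_set PG" "supp g = S PG" "PH \<subset> PG"
    and "seq_eq (restrict_to g PH) h" by blast
  then have "supp_graph g = supp_graph h"
    using max seq_eq_restrict_to_iff assms(3)
    unfolding semigroup_solution_def prime_semigroup_def by blast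
  then have "S PG = S PH"
    using g(3) assms(3) Domain_supp_graph by metis
  then show False
    using g(2,4) assms(2) S_subset_iff by blast
qed

lemma ex_maximal_extension:
  assumes "semigroup_solution f"
  obtains h where "semigroup_solution h" "supp_graph f \<subseteq> supp_graph h"
    and "\<And>g. semigroup_solution g \<Longrightarrow> supp_graph h \<subseteq> supp_graph g \<Longrightarrow>
      supp_graph g = supp_graph h"
proof -
  define \<A> where "\<A> = supp_graph ` {g. semigroup_solution g \<and> supp_graph f \<subseteq> supp_graph g}"
  have "\<A> \<noteq> {}"
    using assms unfolding \<A>_def by blast
  then have "\<exists>M\<in>\<A>. \<forall>X\<in>\<A>. M \<subseteq> X \<longrightarrow> X = M"
  proof (rule subset_Zorn_nonempty)
    fix \<C> assume "\<C> \<noteq> {}" "subset.chain \<A> \<C>"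
    then have "subset.chain (supp_graph ` Collect semigroup_solution) \<C>"
      "supp_graph f \<subseteq> \<Union>\<C>"
      unfolding \<A>_def subset.chain_def by blast+
    then show "\<Union>\<C> \<in> \<A>"
      using Union_chain_supp_graph[OF \<open>\<C> \<noteq> {}\<close>] unfolding \<A>_def by force
  qed
  then obtain h where h: "semigroup_solution h" "supp_graph f \<subseteq> supp_graph h"
    and max: "\<forall>X\<in>\<A>. supp_graph h \<subseteq> X \<longrightarrow> X = supp_graph h"
    unfolding \<A>_def by blast
  show ?thesis
  proof (rule that[OF h])
    fix g assume "semigroup_solution g" "supp_graph h \<subseteq> supp_graph g"
    then have "supp_graph g \<in> \<A>"
      using h(2) unfolding \<A>_def by blast
    then show "supp_graph g = supp_graph h"
      using max \<open>supp_graph h \<subseteq> supp_graph g\<close> by blast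
  qed
qed

theorem mainTheorem8:
  fixes f :: "nat \<Rightarrow> 'a::field poly" and P :: "nat set"
  assumes "prime_set P" and "P \<noteq> {}"
    and "is_solution f" and "supp f = S P"
  shows "\<exists>PH (h :: nat \<Rightarrow> 'a poly). prime_set PH \<and> P \<subseteq> PH \<and> is_solution h \<and>
           supp h = S PH \<and> seq_eq (restrict_to h P) f \<and> maximal_solution h PH"
proof -
  have "semigroup_solution f"
    using assms(1,3,4) unfolding semigroup_solution_def prime_semigroup_def by blast
  then obtain h where h: "semigroup_solution h" "supp_graph f \<subseteq> supp_graph h"
    and max: "\<And>g. semigroup_solution g \<Longrightarrow> supp_graph h \<subseteq> supp_graph g \<Longrightarrow>
      supp_graph g = supp_graph h"
    using ex_maximal_extension by blast
  then obtain PH where PH: "prime_set PH" "supp h = S PH"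
    unfolding semigroup_solution_def prime_semigroup_def by blast
  have "S P \<subseteq> S PH"
    using Domain_mono[OF h(2)] assms(4) PH(2) by simp
  then have "P \<subseteq> PH"
    using S_subset_iff assms(1) by blast
  moreover have "seq_eq (restrict_to h P) f"
    using h(2) seq_eq_restrict_to_iff assms(4) by blast
  moreover have "maximal_solution h PH"
    using h(1) PH max maximal_solutionI unfolding semigroup_solution_def by blast
  ultimately show ?thesis
    using h(1) PH unfolding semigroup_solution_def by blast
qed

end
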